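(* Let $\theta_0>0$ and let $F_0$ be a probability distribution on $[0,\infty)$ such that for some $\gamma>0$, $\int (z^{\gamma}+z^{-\gamma})\,dF_0(z)<\infty$. Let $Z\sim F_0$. Then for every $0<\epsilon<\tfrac14$ there exists a probability distribution $F^*$ supported on \[ \left[\left(\frac{\epsilon}{\mathbb{E}[Z^{-\gamma}]}\right)^{1/\gamma},\ \left(\frac{\mathbb{E}[Z^{\gamma}]}{\epsilon}\right)^{1/\gamma}\right] \] such that $\|p_{\theta_0,F_0}-p_{\theta_0,F^*}\|_1<4\epsilon$.
   Context: For $\theta>0$ and a probability measure $F$ on $(0,\infty)$, $p_{\theta,F}(x,y)=\int z^2\theta e^{-z(x+\theta y)}\,dF(z)$ for $(x,y)\in(0,\infty)^2$ (exponential frailty model). $\|\cdot\|_1$ is the $L^1$ norm with respect to Lebesgue measure on $(0,\infty)^2$. *)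

theory Defs
  imports "HOL-Analysis.Analysis" "HOL-Probability.Probability"
begin

definition frailty_density :: "real \<Rightarrow> real measure \<Rightarrow> real \<Rightarrow> real \<Rightarrow> real" where
  "frailty_density \<theta> F x y = (\<integral>z. z^2 * \<theta> * exp (- z * (x + \<theta> * y)) \<partial>F)"

definition L1_dist_quadrant :: "(real \<Rightarrow> real \<Rightarrow> real) \<Rightarrow> (real \<Rightarrow> real \<Rightarrow> real) \<Rightarrow> ennreal" where
  "L1_dist_quadrant p q =
     (\<integral>\<^sup>+ w \<in> {0<..} \<times> {0<..}. ennreal \<bar>p (fst w) (snd w) - q (fst w) (snd w)\<bar> \<partial>(lborel :: (real \<times> real) measure))"

definition prob_dist_pos :: "real measure \<Rightarrow> bool" where
  "prob_dist_pos F \<longleftrightarrow> prob_space F \<and> sets F = sets borel \<and> measure F {0<..} = 1"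

end

theory Submission
  imports Defs
begin

(* Take for Fs the law F0 conditioned on S = [a, b].  Fs has density g = 1_S / F0(S) with
   respect to F0, so p_{theta,F0} - p_{theta,Fs} integrates the kernel against (1 - g) dF0;
   as each kernel (x, y) |-> z^2 theta exp(-z (x + theta y)) is a probability density on the
   quadrant, Tonelli bounds the L1 distance by int |1 - g| dF0 = 2 (1 - F0(S)).  Markov's
   inequality for Z^gamma and Z^-gamma, made strict because the integrand exceeds the threshold
   on the tail, bounds each tail of S by less than epsilon, whence 2 (1 - F0(S)) < 4 epsilon. *)

lemma prob_dist_pos_AE_pos: "prob_dist_pos F \<Longrightarrow> AE z in F. 0 < z"
  unfolding prob_dist_pos_def using prob_space.AE_prob_1[of F "{0<..}"] by auto

lemma (in finite_measure) Markov_inequality_strict: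
  fixes X :: "'a \<Rightarrow> real"
  assumes X: "integrable M X" and X_nonneg: "AE x in M. 0 \<le> X x" and "0 < \<epsilon>"
  shows "measure M {x\<in>space M. (\<integral>x. X x \<partial>M) / \<epsilon> < X x} < \<epsilon>"
proof -
  define t where "t = (\<integral>x. X x \<partial>M) / \<epsilon>"
  define A where "A = {x\<in>space M. t < X x}"
  have [measurable]: "X \<in> borel_measurable M"
    using X by auto
  have A_sets: "A \<in> sets M"
    unfolding A_def by measurable
  have "0 \<le> t"
    unfolding t_def using integral_nonneg_AE[OF X_nonneg] \<open>0 < \<epsilon>\<close> by simp
  show ?thesis
  proof (cases "emeasure M A = 0")
    case True
    then show ?thesis
      using \<open>0 < \<epsilon>\<close> by (simp add: A_def t_def measure_def)
  next
    case False
    have "t * measure M A = (\<integral>x. t * indicator A x \<partial>M)"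
      using A_sets by simp
    also have "\<dots> < (\<integral>x. X x \<partial>M)"
    proof (rule integral_less_AE[OF _ X False A_sets])
      show "integrable M (\<lambda>x. t * indicator A x)"
        using A_sets by (simp add: emeasure_eq_measure)
      show "AE x in M. x \<in> A \<longrightarrow> t * indicator A x \<noteq> X x"
        by (auto simp: A_def)
      show "AE x in M. t * indicator A x \<le> X x"
        using X_nonneg by eventually_elim (auto simp: A_def indicator_def)
    qed
    also have "\<dots> = t * \<epsilon>"
      using \<open>0 < \<epsilon>\<close> by (simp add: t_def)
    finally have "t * measure M A < t * \<epsilon>" .
    then have "measure M A < \<epsilon>"
      using \<open>0 \<le> t\<close> by (rule mult_left_less_imp_less)
    then show ?thesis
      by (simp add: A_def t_def)
  qed
qed

lemma upper_tail_powr_moment: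
  fixes F :: "real measure"
  assumes "prob_space F" and [measurable_cong]: "sets F = sets borel"
    and "0 < \<gamma>" "integrable F (\<lambda>z. z powr \<gamma>)" "0 < \<epsilon>"
  shows "measure F {((\<integral>z. z powr \<gamma> \<partial>F) / \<epsilon>) powr (1/\<gamma>) <..} < \<epsilon>"
proof -
  interpret prob_space F by fact
  define c where "c = (\<integral>z. z powr \<gamma> \<partial>F) / \<epsilon>"
  have "0 \<le> c"
    unfolding c_def using \<open>0 < \<epsilon>\<close> by (simp add: integral_nonneg_AE)
  then have "(c powr (1/\<gamma>)) powr \<gamma> = c"
    using \<open>0 < \<gamma>\<close> by (simp add: powr_powr)
  then have "{c powr (1/\<gamma>) <..} \<subseteq> {z\<in>space F. c < z powr \<gamma>}"
    using \<open>0 < \<gamma>\<close> powr_less_mono2[of \<gamma> "c powr (1/\<gamma>)"]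
    by (auto simp: sets_eq_imp_space_eq[OF assms(2)])
  then have "measure F {c powr (1/\<gamma>) <..} \<le> measure F {z\<in>space F. c < z powr \<gamma>}"
    by (intro finite_measure_mono) measurable
  also have "\<dots> < \<epsilon>"
    unfolding c_def by (rule Markov_inequality_strict[OF assms(4) _ assms(5)]) simp
  finally show ?thesis
    by (simp add: c_def)
qed

lemma lower_tail_powr_moment:
  fixes F :: "real measure"
  assumes F: "prob_dist_pos F"
    and "0 < \<gamma>" "integrable F (\<lambda>z. z powr (- \<gamma>))" "0 < \<epsilon>"
  shows "measure F {..< (\<epsilon> / (\<integral>z. z powr (- \<gamma>) \<partial>F)) powr (1/\<gamma>)} < \<epsilon>"
proof -
  interpret prob_space F
    using F by (simp add: prob_dist_pos_def)
  have [measurable_cong]: "sets F = sets borel"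
    using F by (simp add: prob_dist_pos_def)
  define c where "c = (\<integral>z. z powr (- \<gamma>) \<partial>F) / \<epsilon>"
  define a where "a = (\<epsilon> / (\<integral>z. z powr (- \<gamma>) \<partial>F)) powr (1/\<gamma>)"
  have "z powr (- \<gamma>) > c" if "0 < z" "z < a" for z
  proof -
    have "0 < a"
      using that by simp
    then have "(\<integral>z. z powr (- \<gamma>) \<partial>F) \<noteq> 0"
      by (auto simp: a_def)
    moreover have "0 \<le> (\<integral>z. z powr (- \<gamma>) \<partial>F)"
      by (simp add: integral_nonneg_AE)
    ultimately have "0 < c"
      using \<open>0 < \<epsilon>\<close> by (simp add: c_def less_le)
    then have "a powr (- \<gamma>) = c"
      unfolding a_def c_def using \<open>0 < \<gamma>\<close> \<open>0 < \<epsilon>\<close> by (simp add: powr_powr powr_minus_divide)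
    then show ?thesis
      using that \<open>0 < \<gamma>\<close> powr_less_mono2_neg[of "- \<gamma>" z a] by simp
  qed
  then have "AE z in F. z \<in> {..< a} \<longrightarrow> z \<in> {z\<in>space F. c < z powr (- \<gamma>)}"
    using prob_dist_pos_AE_pos[OF F] by (auto simp: sets_eq_imp_space_eq[of F borel])
  then have "measure F {..< a} \<le> measure F {z\<in>space F. c < z powr (- \<gamma>)}"
    by (rule finite_measure_mono_AE) measurable
  also have "\<dots> < \<epsilon>"
    unfolding c_def by (rule Markov_inequality_strict[OF assms(3) _ assms(4)]) simp
  finally show ?thesis
    by (simp add: a_def)
qed

lemma prob_powr_moment_interval_gt:
  fixes F :: "real measure"
  assumes F: "prob_dist_pos F"
    and "0 < \<gamma>" "integrable F (\<lambda>z. z powr \<gamma> + z powr (- \<gamma>))" "0 < \<epsilon>"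
  shows "1 - 2 * \<epsilon> < measure F {(\<epsilon> / (\<integral>z. z powr (- \<gamma>) \<partial>F)) powr (1/\<gamma>) ..
                                     ((\<integral>z. z powr \<gamma> \<partial>F) / \<epsilon>) powr (1/\<gamma>)}"
    (is "_ < measure F {?a..?b}")
proof -
  interpret prob_space F
    using F by (simp add: prob_dist_pos_def)
  have sets_F [measurable_cong]: "sets F = sets borel"
    using F by (simp add: prob_dist_pos_def)
  have "integrable F (\<lambda>z. z powr \<gamma>)"
    by (rule Bochner_Integration.integrable_bound[OF assms(3)]) auto
  moreover have "integrable F (\<lambda>z. z powr (- \<gamma>))"
    by (rule Bochner_Integration.integrable_bound[OF assms(3)]) auto
  ultimately
  have tails: "measure F {..< ?a} < \<epsilon>" "measure F {?b <..} < \<epsilon>"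
    using assms lower_tail_powr_moment upper_tail_powr_moment[OF prob_space_axioms sets_F]
    by auto
  have "1 - measure F {?a..?b} = measure F (space F - {?a..?b})"
    by (rule prob_compl[symmetric]) (simp add: sets_F)
  also have "\<dots> \<le> measure F ({..< ?a} \<union> {?b <..})"
    by (rule finite_measure_mono) (auto simp: sets_F)
  also have "\<dots> \<le> measure F {..< ?a} + measure F {?b <..}"
    by (rule measure_subadditive) (auto simp: sets_F emeasure_eq_measure)
  finally show ?thesis
    using tails by simp
qed

definition frailty_kernel :: "real \<Rightarrow> real \<Rightarrow> real \<Rightarrow> real \<Rightarrow> real" where
  "frailty_kernel \<theta> z x y = z^2 * \<theta> * exp (- z * (x + \<theta> * y))"

lemma frailty_density_eq_integral_kernel:
  "frailty_density \<theta> F x y = (\<integral>z. frailty_kernel \<theta> z x y \<partial>F)"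
  by (simp add: frailty_density_def frailty_kernel_def)

lemma frailty_kernel_nonneg: "0 \<le> \<theta> \<Longrightarrow> 0 \<le> frailty_kernel \<theta> z x y"
  by (simp add: frailty_kernel_def)

lemma power2_mult_exp_neg_le:
  fixes z s :: real
  assumes "0 \<le> z" "0 < s"
  shows "z^2 * exp (- z * s) \<le> 4 / s^2"
proof -
  have "z * s / 2 \<le> exp (z * s / 2)"
    using exp_ge_add_one_self[of "z * s / 2"] by linarith
  then have "(z * s / 2)^2 \<le> (exp (z * s / 2))^2"
    using assms by (intro power_mono) auto
  also have "\<dots> = exp (z * s)"
    by (simp add: power2_eq_square flip: exp_add)
  finally have "z^2 * s^2 * exp (- z * s) \<le> 4 * exp (z * s) * exp (- z * s)"
    by (intro mult_right_mono) (auto simp: power_mult_distrib power_divide)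
  also have "\<dots> = 4"
    by (simp flip: exp_add)
  finally show ?thesis
    using assms by (simp add: field_simps)
qed

lemma frailty_kernel_le:
  assumes "0 \<le> z" "0 < \<theta>" "0 < x" "0 < y"
  shows "frailty_kernel \<theta> z x y \<le> \<theta> * (4 / (x + \<theta> * y)^2)"
proof -
  have "frailty_kernel \<theta> z x y = \<theta> * (z^2 * exp (- z * (x + \<theta> * y)))"
    by (simp add: frailty_kernel_def)
  also have "\<dots> \<le> \<theta> * (4 / (x + \<theta> * y)^2)"
    using assms by (intro mult_left_mono power2_mult_exp_neg_le) (auto intro: add_pos_pos)
  finally show ?thesis .
qed

lemma nn_integral_exp_neg_Ioi:
  fixes l :: real
  assumes "0 < l"
  shows "(\<integral>\<^sup>+x. ennreal (l * exp (- x * l)) * indicator {0<..} x \<partial>lborel) = 1"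
proof -
  have "(\<integral>\<^sup>+x. ennreal (l * exp (- x * l)) * indicator {0<..} x \<partial>lborel)
      = (\<integral>\<^sup>+x. ennreal (exponential_density l x) \<partial>lborel)"
    by (intro nn_integral_cong_AE, use AE_lborel_singleton[of 0] in eventually_elim)
       (auto simp: exponential_density_def indicator_def)
  also have "\<dots> = emeasure (density lborel (exponential_density l)) UNIV"
    by (subst emeasure_density) auto
  also have "\<dots> = 1"
    using prob_space.emeasure_space_1[OF prob_space_exponential_density[OF assms]] by simp
  finally show ?thesis .
qed

lemma nn_integral_frailty_kernel:
  assumes "0 < z" "0 < \<theta>"
  shows "(\<integral>\<^sup>+w. ennreal (frailty_kernel \<theta> z (fst w) (snd w)) * indicator ({0<..} \<times> {0<..}) w
           \<partial>(lborel :: (real \<times> real) measure)) = 1"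
proof -
  let ?e = "\<lambda>l x. ennreal (l * exp (- x * l)) * indicator {0<..} x :: ennreal"
  have split: "ennreal (frailty_kernel \<theta> z (fst w) (snd w)) * indicator ({0<..} \<times> {0<..}) w
      = ?e z (fst w) * ?e (z * \<theta>) (snd w)" for w :: "real \<times> real"
  proof -
    have "frailty_kernel \<theta> z (fst w) (snd w)
        = (z * exp (- fst w * z)) * ((z * \<theta>) * exp (- snd w * (z * \<theta>)))"
      by (simp add: frailty_kernel_def power2_eq_square algebra_simps flip: exp_add)
    then show ?thesis
      using assms by (cases w) (auto simp: indicator_def ennreal_mult[symmetric])
  qed
  have "(\<integral>\<^sup>+w. ennreal (frailty_kernel \<theta> z (fst w) (snd w)) * indicator ({0<..} \<times> {0<..}) w
           \<partial>(lborel :: (real \<times> real) measure))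
      = (\<integral>\<^sup>+w. ?e z (fst w) * ?e (z * \<theta>) (snd w) \<partial>(lborel \<Otimes>\<^sub>M lborel))"
    by (simp only: split lborel_prod)
  also have "\<dots> = (\<integral>\<^sup>+x. \<integral>\<^sup>+y. ?e z x * ?e (z * \<theta>) y \<partial>lborel \<partial>lborel)"
    by (subst lborel.nn_integral_fst[symmetric]) auto
  also have "\<dots> = (\<integral>\<^sup>+x. ?e z x * (\<integral>\<^sup>+y. ?e (z * \<theta>) y \<partial>lborel) \<partial>lborel)"
    by (subst nn_integral_cmult) auto
  also have "\<dots> = 1"
    using nn_integral_exp_neg_Ioi[of z] nn_integral_exp_neg_Ioi[of "z * \<theta>"] assms by simp
  finally show ?thesis .
qed

lemma abs_frailty_density_diff_density_le:
  fixes F :: "real measure" and g :: "real \<Rightarrow> real"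
  assumes "finite_measure F" and [measurable_cong]: "sets F = sets borel"
    and F_pos: "AE z in F. 0 < z" and "0 < \<theta>"
    and [measurable]: "g \<in> borel_measurable borel"
    and g_nonneg: "\<And>z. 0 \<le> g z" and g: "integrable F g"
    and "0 < x" "0 < y"
  shows "ennreal \<bar>frailty_density \<theta> F x y - frailty_density \<theta> (density F g) x y\<bar>
           \<le> (\<integral>\<^sup>+z. ennreal (frailty_kernel \<theta> z x y * \<bar>1 - g z\<bar>) \<partial>F)"
proof -
  interpret finite_measure F by fact
  define k where "k z = frailty_kernel \<theta> z x y" for z
  define B where "B = \<theta> * (4 / (x + \<theta> * y)^2)"
  have [measurable]: "k \<in> borel_measurable borel"
    unfolding k_def frailty_kernel_def by measurable
  have k_bound: "AE z in F. norm (k z) \<le> B"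
    using F_pos by eventually_elim
      (use assms frailty_kernel_le frailty_kernel_nonneg in \<open>auto simp: k_def B_def\<close>)
  have k: "integrable F k"
    by (rule integrable_const_bound[OF k_bound]) simp
  have gk: "integrable F (\<lambda>z. g z * k z)"
  proof (rule Bochner_Integration.integrable_bound)
    show "integrable F (\<lambda>z. g z * B)"
      using g by simp
    show "AE z in F. norm (g z * k z) \<le> norm (g z * B)"
      using k_bound by eventually_elim (use g_nonneg in \<open>auto simp: abs_mult intro: mult_left_mono\<close>)
  qed simp
  have "frailty_density \<theta> F x y - frailty_density \<theta> (density F g) x y = (\<integral>z. k z - g z * k z \<partial>F)"
    using k gk g_nonneg
    by (simp add: frailty_density_eq_integral_kernel integral_density flip: k_def)
  then have "ennreal \<bar>frailty_density \<theta> F x y - frailty_density \<theta> (density F g) x y\<bar>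
      \<le> (\<integral>\<^sup>+z. norm (k z - g z * k z) \<partial>F)"
    using integral_norm_bound_ennreal[of F "\<lambda>z. k z - g z * k z"] k gk by simp
  also have "\<dots> = (\<integral>\<^sup>+z. ennreal (k z * \<bar>1 - g z\<bar>) \<partial>F)"
  proof (intro nn_integral_cong)
    fix z
    have "k z - g z * k z = k z * (1 - g z)"
      by (simp add: algebra_simps)
    then show "ennreal (norm (k z - g z * k z)) = ennreal (k z * \<bar>1 - g z\<bar>)"
      using \<open>0 < \<theta>\<close> frailty_kernel_nonneg[of \<theta> z x y] by (simp add: k_def abs_mult)
  qed
  finally show ?thesis
    by (simp add: k_def)
qed

lemma L1_dist_quadrant_frailty_density_le:
  fixes F :: "real measure" and g :: "real \<Rightarrow> real"
  assumes "finite_measure F" and sets_F [measurable_cong]: "sets F = sets borel"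
    and F_pos: "AE z in F. 0 < z" and "0 < \<theta>"
    and [measurable]: "g \<in> borel_measurable borel"
    and "\<And>z. 0 \<le> g z" "integrable F g"
  shows "L1_dist_quadrant (frailty_density \<theta> F) (frailty_density \<theta> (density F g))
           \<le> (\<integral>\<^sup>+z. ennreal \<bar>1 - g z\<bar> \<partial>F)"
proof -
  interpret F: finite_measure F by fact
  interpret pair_sigma_finite F "lborel :: (real \<times> real) measure"
    by (intro pair_sigma_finite.intro F.sigma_finite_measure_axioms lborel.sigma_finite_measure_axioms)
  define Q where "Q = ({0<..} \<times> {0<..} :: (real \<times> real) set)"
  define h where "h z w = ennreal (frailty_kernel \<theta> z (fst w) (snd w) * \<bar>1 - g z\<bar>) * indicator Q w"
    for z and w :: "real \<times> real"
  have sets_lborel_pair: "sets (lborel :: (real \<times> real) measure) = sets (borel \<Otimes>\<^sub>M borel)"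
    by (subst lborel_prod[symmetric]) (intro sets_pair_measure_cong sets_lborel)
  have [measurable]: "Q \<in> sets borel"
    unfolding Q_def by (intro borel_open open_Times) auto
  have [measurable]: "Q \<in> sets (borel \<Otimes>\<^sub>M borel)"
    unfolding Q_def by (intro pair_measureI) auto
  have [measurable_cong]:
    "sets (F \<Otimes>\<^sub>M (lborel :: (real \<times> real) measure)) = sets (borel \<Otimes>\<^sub>M (borel \<Otimes>\<^sub>M borel))"
    by (intro sets_pair_measure_cong sets_F sets_lborel_pair)
  have "L1_dist_quadrant (frailty_density \<theta> F) (frailty_density \<theta> (density F g))
      \<le> (\<integral>\<^sup>+w. (\<integral>\<^sup>+z. h z w \<partial>F) \<partial>lborel)"
    unfolding L1_dist_quadrant_def h_def
    using abs_frailty_density_diff_density_le[OF assms]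
    by (intro nn_integral_mono)
      (auto simp: Q_def indicator_def simp flip: nn_integral_multc)
  also have "\<dots> = (\<integral>\<^sup>+z. (\<integral>\<^sup>+w. h z w \<partial>lborel) \<partial>F)"
    by (rule Fubini') (simp add: h_def frailty_kernel_def split_beta')
  also have "\<dots> = (\<integral>\<^sup>+z. ennreal \<bar>1 - g z\<bar> \<partial>F)"
  proof (rule nn_integral_cong_AE)
    show "AE z in F. (\<integral>\<^sup>+w. h z w \<partial>lborel) = ennreal \<bar>1 - g z\<bar>"
      using F_pos
    proof eventually_elim
      case (elim z)
      have "h z = (\<lambda>w. ennreal (frailty_kernel \<theta> z (fst w) (snd w)) * indicator Q w * \<bar>1 - g z\<bar>)"
        using \<open>0 < \<theta>\<close> frailty_kernel_nonneg by (auto simp: h_def fun_eq_iff ennreal_mult mult_ac)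
      moreover have "(\<lambda>w. ennreal (frailty_kernel \<theta> z (fst w) (snd w)) * indicator Q w)
          \<in> borel_measurable (borel :: (real \<times> real) measure)"
        by (subst borel_prod[symmetric]) (unfold frailty_kernel_def, measurable)
      ultimately have "(\<integral>\<^sup>+w. h z w \<partial>lborel)
          = (\<integral>\<^sup>+w. ennreal (frailty_kernel \<theta> z (fst w) (snd w)) * indicator Q w \<partial>lborel)
              * ennreal \<bar>1 - g z\<bar>"
        by (simp add: nn_integral_multc)
      then show ?case
        using nn_integral_frailty_kernel[OF elim \<open>0 < \<theta>\<close>] by (simp add: Q_def)
    qed
  qed
  finally show ?thesis .
qed

text \<open>The library's \<^const>\<open>uniform_measure\<close> \<open>F S\<close> is \<open>F\<close> conditioned on \<open>S\<close>, with density \<open>indicator S / F S\<close>.\<close>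

lemma prob_dist_pos_uniform_measure:
  assumes F: "prob_dist_pos F" and S: "S \<in> sets borel" "0 < measure F S"
  shows "prob_dist_pos (uniform_measure F S)" and "measure (uniform_measure F S) S = 1"
proof -
  interpret prob_space F
    using F by (simp add: prob_dist_pos_def)
  have sets_F: "sets F = sets borel"
    using F by (simp add: prob_dist_pos_def)
  have "measure F (S \<inter> {0<..}) = measure F S"
    using prob_dist_pos_AE_pos[OF F] S by (intro measure_eq_AE) (auto simp: sets_F)
  then show "prob_dist_pos (uniform_measure F S)"
    using S by (auto simp: prob_dist_pos_def sets_F emeasure_eq_measure intro!: prob_space_uniform_measure)
  show "measure (uniform_measure F S) S = 1"
    using S by (simp add: sets_F emeasure_eq_measure)
qed

lemma uniform_measure_eq_density:
  assumes "finite_measure F" "0 < measure F S"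
  shows "uniform_measure F S = density F (\<lambda>z. ennreal (indicator S z / measure F S))"
  using assms
  by (auto simp: uniform_measure_def finite_measure.emeasure_eq_measure divide_ennreal
      simp flip: ennreal_indicator intro!: density_cong)

lemma L1_dist_quadrant_uniform_measure_le:
  assumes F: "prob_dist_pos F" and "0 < \<theta>" and S_sets [measurable]: "S \<in> sets borel"
    and S_pos: "0 < measure F S"
  shows "L1_dist_quadrant (frailty_density \<theta> F) (frailty_density \<theta> (uniform_measure F S))
           \<le> ennreal (2 - 2 * measure F S)"
proof -
  interpret prob_space F
    using F by (simp add: prob_dist_pos_def)
  have sets_F [measurable_cong]: "sets F = sets borel"
    using F by (simp add: prob_dist_pos_def)
  define p where "p = measure F S"
  define g where "g z = indicator S z / p" for z :: real
  have "p \<le> 1" "0 < p"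
    using S_pos by (simp_all add: p_def)
  have S_integrable: "integrable F (indicator S :: real \<Rightarrow> real)"
    by (simp add: sets_F emeasure_eq_measure)
  have "uniform_measure F S = density F (\<lambda>z. ennreal (g z))"
    using uniform_measure_eq_density[OF finite_measure_axioms S_pos] by (simp add: g_def p_def)
  then have "L1_dist_quadrant (frailty_density \<theta> F) (frailty_density \<theta> (uniform_measure F S))
      \<le> (\<integral>\<^sup>+z. ennreal \<bar>1 - g z\<bar> \<partial>F)"
    using \<open>0 < p\<close> S_integrable
    by (simp only:, intro L1_dist_quadrant_frailty_density_le[OF finite_measure_axioms sets_F
          prob_dist_pos_AE_pos[OF F] \<open>0 < \<theta>\<close>]) (auto simp: g_def)
  also have "\<dots> = ennreal (\<integral>z. \<bar>1 - g z\<bar> \<partial>F)"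
    using S_integrable by (intro nn_integral_eq_integral) (auto simp: g_def)
  also have "(\<integral>z. \<bar>1 - g z\<bar> \<partial>F) = (\<integral>z. 1 - indicator S z + (1/p - 1) * indicator S z \<partial>F)"
    using \<open>0 < p\<close> \<open>p \<le> 1\<close> by (intro Bochner_Integration.integral_cong)
      (auto simp: g_def indicator_def field_simps)
  also have "\<dots> = 2 - 2 * p"
    using S_integrable \<open>0 < p\<close> by (simp add: p_def prob_space field_simps)
  finally show ?thesis
    by (simp add: p_def)
qed

theorem mainTheorem3:
  fixes \<theta>0 \<gamma> \<epsilon> :: real and F0 :: "real measure"
  assumes "\<theta>0 > 0"
    and "prob_dist_pos F0"
    and "\<gamma> > 0"
    and "integrable F0 (\<lambda>z. z powr \<gamma> + z powr (- \<gamma>))"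
    and "0 < \<epsilon>" and "\<epsilon> < 1/4"
  shows "\<exists>Fs. prob_dist_pos Fs \<and>
           measure Fs {(\<epsilon> / (\<integral>z. z powr (- \<gamma>) \<partial>F0)) powr (1/\<gamma>) ..
                       ((\<integral>z. z powr \<gamma> \<partial>F0) / \<epsilon>) powr (1/\<gamma>)} = 1 \<and>
           L1_dist_quadrant (frailty_density \<theta>0 F0) (frailty_density \<theta>0 Fs) < ennreal (4 * \<epsilon>)"
proof -
  define S where "S = {(\<epsilon> / (\<integral>z. z powr (- \<gamma>) \<partial>F0)) powr (1/\<gamma>) ..
                       ((\<integral>z. z powr \<gamma> \<partial>F0) / \<epsilon>) powr (1/\<gamma>)}"
  have S_sets: "S \<in> sets borel"
    by (simp add: S_def)
  have S_large: "1 - 2 * \<epsilon> < measure F0 S"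
    unfolding S_def using assms by (intro prob_powr_moment_interval_gt) auto
  then have S_pos: "0 < measure F0 S"
    using \<open>\<epsilon> < 1/4\<close> by simp
  have "L1_dist_quadrant (frailty_density \<theta>0 F0) (frailty_density \<theta>0 (uniform_measure F0 S))
      \<le> ennreal (2 - 2 * measure F0 S)"
    using assms S_sets S_pos by (intro L1_dist_quadrant_uniform_measure_le)
  also have "\<dots> < ennreal (4 * \<epsilon>)"
    using S_large \<open>0 < \<epsilon>\<close> by (intro ennreal_lessI) auto
  finally show ?thesis
    using prob_dist_pos_uniform_measure[OF assms(2) S_sets S_pos] unfolding S_def by blast
qed

end
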